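(* For every $A\in\mathbb{M}_n$, $$\|A\|_1=\sup\Big\{\sum_{i=1}^k\|C_iAC_i^*\|_\infty : k\in\mathbb{N},\ C_1,\dots,C_k\in\mathbb{M}_n,\ \sum_{i=1}^k C_i^*C_i=I\Big\},$$ and the trace norm $\|\cdot\|_1$ is the minimum element of the class of $L$-norms $\||\cdot\||$ on $\mathbb{M}_n$ satisfying $\|\cdot\|_\infty\le\||\cdot\||$.
   Context: $\mathbb{M}_n$ is the algebra of complex $n\times n$ matrices with identity $I$; $\|\cdot\|_\infty$ is the operator norm and $\|A\|_1=\mathrm{Tr}(|A|)$ the trace norm. A norm $\||\cdot\||$ on $\mathbb{M}_n$ is an $L$-norm if $\sum_{i=1}^k\||C_iXC_i^*\||\le\||X\||$ for all $k$, all $X$ and all $C_i$ with $\sum_{i=1}^k C_i^*C_i=I$. Inequalities between norms are pointwise. *)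

theory Defs
  imports "HOL-Analysis.Analysis"
begin

text \<open>Complex n x n matrices, with n the cardinality of the finite index type 'n.\<close>
type_synonym 'n cmat = "complex^'n^'n"

definition cadj :: "'n::finite cmat \<Rightarrow> 'n cmat" where
  "cadj A = (\<chi> i j. cnj (A $ j $ i))"

text \<open>Standard Hermitian form on complex^n (conjugate-linear in the first slot).\<close>
definition cinner :: "complex^'n::finite \<Rightarrow> complex^'n \<Rightarrow> complex" where
  "cinner x y = (\<Sum>i\<in>UNIV. cnj (x $ i) * y $ i)"

definition psd :: "'n::finite cmat \<Rightarrow> bool" where
  "psd B \<longleftrightarrow> cadj B = B \<and> (\<forall>x. 0 \<le> Re (cinner x (B *v x)))"

text \<open>|A| = (A^* A)^{1/2}, the unique positive semidefinite square root.\<close>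
definition mabs :: "'n::finite cmat \<Rightarrow> 'n cmat" where
  "mabs A = (THE B. psd B \<and> B ** B = cadj A ** A)"

definition opnorm :: "'n::finite cmat \<Rightarrow> real" where
  "opnorm A = onorm (\<lambda>x. A *v x)"

text \<open>Trace norm ||A||_1 = Tr |A| (real since |A| is Hermitian).\<close>
definition trnorm :: "'n::finite cmat \<Rightarrow> real" where
  "trnorm A = Re (trace (mabs A))"

definition is_matrix_norm :: "('n::finite cmat \<Rightarrow> real) \<Rightarrow> bool" where
  "is_matrix_norm N \<longleftrightarrow>
     (\<forall>X. 0 \<le> N X) \<and> (\<forall>X. N X = 0 \<longleftrightarrow> X = 0) \<and>
     (\<forall>c X. N (\<chi> i j. c * X $ i $ j) = cmod c * N X) \<and> (\<forall>X Y. N (X + Y) \<le> N X + N Y)"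

definition is_L_norm :: "('n::finite cmat \<Rightarrow> real) \<Rightarrow> bool" where
  "is_L_norm N \<longleftrightarrow> is_matrix_norm N \<and>
     (\<forall>(k::nat) (C::nat \<Rightarrow> 'n cmat) X.
        (\<Sum>i<k. cadj (C i) ** C i) = mat 1 \<longrightarrow>
        (\<Sum>i<k. N (C i ** X ** cadj (C i))) \<le> N X)"

end

theory Submission
  imports Defs
begin

text \<open>
  Let \<open>T\<close> be an orthonormal eigenbasis of \<open>A\<^sup>* A\<close>. Then \<open>|A|\<close> is diagonal in \<open>T\<close>
  with entries \<open>\<parallel>A s\<parallel>\<close>, so \<open>\<parallel>A\<parallel>\<^sub>1 = \<Sum>\<^sub>s \<parallel>A s\<parallel>\<close>, and \<open>A = \<Sum>\<^sub>s (A s) s\<^sup>*\<close>.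
  For a Kraus family \<open>(C\<^sub>i)\<close> each \<open>C\<^sub>i A C\<^sub>i\<^sup>* = \<Sum>\<^sub>s (C\<^sub>i A s) (C\<^sub>i s)\<^sup>*\<close> has operator
  norm at most \<open>\<Sum>\<^sub>s \<parallel>C\<^sub>i A s\<parallel> \<parallel>C\<^sub>i s\<parallel>\<close>; Cauchy--Schwarz over \<open>i\<close> together with
  \<open>\<Sum>\<^sub>i \<parallel>C\<^sub>i x\<parallel>\<^sup>2 = \<parallel>x\<parallel>\<^sup>2\<close> bounds the total by \<open>\<parallel>A\<parallel>\<^sub>1\<close>.

  Conversely, write \<open>A = U |A|\<close> with \<open>U\<close> unitary and take an orthonormal eigenbasis
  \<open>x\<^sub>1, \<dots>, x\<^sub>n\<close> of \<open>U\<close>. The rank-one Kraus family \<open>C\<^sub>j = e x\<^sub>j\<^sup>*\<close> gives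
  \<open>\<Sum>\<^sub>j \<parallel>C\<^sub>j A C\<^sub>j\<^sup>*\<parallel>\<^sub>\<infinity> = \<Sum>\<^sub>j |\<langle>x\<^sub>j, A x\<^sub>j\<rangle>| = \<Sum>\<^sub>j \<langle>x\<^sub>j, |A| x\<^sub>j\<rangle> = \<parallel>A\<parallel>\<^sub>1\<close>, so the
  supremum is attained. The norm axioms for \<open>\<parallel>\<cdot>\<parallel>\<^sub>1\<close> follow from this formula; the
  L-property follows by composing \<open>(C\<^sub>i)\<close> with attaining families for the \<open>C\<^sub>i X C\<^sub>i\<^sup>*\<close>;
  and for an L-norm \<open>N \<ge> \<parallel>\<cdot>\<parallel>\<^sub>\<infinity>\<close> the attaining family for \<open>A\<close> gives
  \<open>\<parallel>A\<parallel>\<^sub>1 \<le> \<Sum>\<^sub>j N (C\<^sub>j A C\<^sub>j\<^sup>*) \<le> N A\<close>.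
\<close>

definition outer :: "complex^'n::finite \<Rightarrow> complex^'n \<Rightarrow> 'n cmat" where
  "outer u v = (\<chi> i j. u$i * cnj (v$j))"

definition smat :: "complex \<Rightarrow> 'n::finite cmat \<Rightarrow> 'n cmat" where
  "smat c M = (\<chi> i j. c * M$i$j)"

definition hermitian :: "'n::finite cmat \<Rightarrow> bool" where
  "hermitian H \<longleftrightarrow> cadj H = H"

definition unitary :: "'n::finite cmat \<Rightarrow> bool" where
  "unitary U \<longleftrightarrow> cadj U ** U = mat 1 \<and> U ** cadj U = mat 1"

lemma cadj_cadj [simp]: "cadj (cadj A) = A"
  by (simp add: cadj_def vec_eq_iff)

lemma cadj_mult: "cadj (A ** B) = cadj B ** cadj A"
  by (simp add: cadj_def matrix_matrix_mult_def vec_eq_iff mult.commute)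

lemma cadj_add: "cadj (A + B) = cadj A + cadj B"
  by (simp add: cadj_def vec_eq_iff)

lemma cadj_zero [simp]: "cadj 0 = 0"
  by (simp add: cadj_def vec_eq_iff)

lemma cadj_mat1 [simp]: "cadj (mat 1) = mat 1"
  by (simp add: cadj_def mat_def vec_eq_iff)

lemma cadj_sum: "cadj (sum f S) = (\<Sum>i\<in>S. cadj (f i))"
  by (induction S rule: infinite_finite_induct) (auto simp: cadj_add)

lemma cadj_smat: "cadj (smat c A) = smat (cnj c) (cadj A)"
  by (simp add: cadj_def smat_def vec_eq_iff)

lemma cadj_outer: "cadj (outer u v) = outer v u"
  by (simp add: outer_def cadj_def vec_eq_iff)

lemma hermitian_cadj_mult_self: "hermitian (cadj A ** A)"
  by (simp add: hermitian_def cadj_mult)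

lemma unitary_cadj: "unitary U \<Longrightarrow> unitary (cadj U)"
  by (simp add: unitary_def)

lemma cinner_add_right: "cinner x (y + z) = cinner x y + cinner x z"
  by (simp add: cinner_def distrib_left sum.distrib)

lemma cinner_add_left: "cinner (x + y) z = cinner x z + cinner y z"
  by (simp add: cinner_def distrib_right sum.distrib)

lemma cinner_diff_right: "cinner x (y - z) = cinner x y - cinner x z"
  by (simp add: cinner_def right_diff_distrib sum_subtractf)

lemma cinner_scale_right: "cinner x (c *s y) = c * cinner x y"
  by (simp add: cinner_def sum_distrib_left mult_ac)

lemma cinner_scale_left: "cinner (c *s x) y = cnj c * cinner x y"
  by (simp add: cinner_def sum_distrib_left mult_ac)

lemma cinner_zero_left [simp]: "cinner 0 y = 0"
  by (simp add: cinner_def)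

lemma cinner_zero_right [simp]: "cinner x 0 = 0"
  by (simp add: cinner_def)

lemma cinner_minus_right: "cinner x (- y) = - cinner x y"
  by (simp add: cinner_def sum_negf)

lemma cinner_commute: "cinner y x = cnj (cinner x y)"
  by (simp add: cinner_def mult.commute)

lemma cinner_sum_right: "cinner x (sum f S) = (\<Sum>i\<in>S. cinner x (f i))"
  by (induction S rule: infinite_finite_induct) (auto simp: cinner_add_right)

lemma cinner_adj: "cinner x (A *v y) = cinner (cadj A *v x) y"
  by (simp add: cinner_def cadj_def matrix_vector_mult_def sum_distrib_left sum_distrib_right mult_ac)
    (rule sum.swap)

lemma cinner_cadj: "cinner x (cadj A *v y) = cinner (A *v x) y"
  using cinner_adj[of x "cadj A" y] by simp

lemma cinner_hermitian: "hermitian H \<Longrightarrow> cinner x (H *v y) = cinner (H *v x) y"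
  unfolding hermitian_def by (metis cinner_adj)

lemma cinner_self: "cinner x x = complex_of_real ((norm x)\<^sup>2)"
proof -
  have "cinner x x = (\<Sum>i\<in>UNIV. complex_of_real ((cmod (x$i))\<^sup>2))"
    unfolding cinner_def by (intro sum.cong refl) (metis complex_norm_square mult.commute)
  also have "\<dots> = complex_of_real ((norm x)\<^sup>2)"
    by (simp add: norm_vec_def L2_set_def sum_nonneg)
  finally show ?thesis .
qed

lemma cinner_self_eq_0 [simp]: "cinner x x = 0 \<longleftrightarrow> x = 0"
  by (simp add: cinner_self)

lemma cinner_self_eq_1: "cinner x x = 1 \<longleftrightarrow> norm x = 1"
proof -
  have "cinner x x = 1 \<longleftrightarrow> (norm x)\<^sup>2 = 1"
    by (metis cinner_self of_real_eq_1_iff)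
  then show ?thesis
    using norm_ge_zero[of x] by (auto simp: power2_eq_1_iff)
qed

lemma inner_eq_Re_cinner: "inner x y = Re (cinner x y)"
  by (simp add: inner_vec_def cinner_def inner_complex_def Re_sum)

lemma norm_scale: "norm (c *s (x::complex^'n::finite)) = cmod c * norm x"
proof -
  have "norm (c *s x) = L2_set (\<lambda>i. cmod c * cmod (x$i)) UNIV"
    by (simp add: norm_vec_def vector_scalar_mult_def norm_mult)
  also have "\<dots> = cmod c * norm x"
    by (simp add: norm_vec_def L2_set_right_distrib)
  finally show ?thesis .
qed

lemma norm_cinner_le: "cmod (cinner x y) \<le> norm x * norm y"
proof -
  have "cmod (cinner x y) \<le> (\<Sum>i\<in>UNIV. \<bar>cmod (x$i)\<bar> * \<bar>cmod (y$i)\<bar>)"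
    unfolding cinner_def by (rule order_trans[OF norm_sum]) (simp add: norm_mult)
  also have "\<dots> \<le> L2_set (\<lambda>i. cmod (x$i)) UNIV * L2_set (\<lambda>i. cmod (y$i)) UNIV"
    by (rule L2_set_mult_ineq)
  finally show ?thesis by (simp add: norm_vec_def)
qed

lemma matrix_add_rdistrib: "(B + C) ** A = B ** A + C ** (A::'a::semiring_1^'p^'m)"
  by (simp add: matrix_matrix_mult_def vec_eq_iff distrib_right sum.distrib)

lemma matrix_mult_sum_right: "A ** sum f S = (\<Sum>i\<in>S. A ** (f i :: 'n::finite cmat))"
  by (induction S rule: infinite_finite_induct) (auto simp: matrix_add_ldistrib)

lemma sum_matrix_mult: "sum f S ** A = (\<Sum>i\<in>S. (f i :: 'n::finite cmat) ** A)"
  by (induction S rule: infinite_finite_induct) (auto simp: matrix_add_rdistrib)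

lemma sum_matrix_vector_mult: "sum f S *v x = (\<Sum>i\<in>S. f i *v (x::complex^'n::finite))"
  by (induction S rule: infinite_finite_induct) (auto simp: matrix_vector_mult_add_rdistrib)

lemma trace_sum: "trace (sum f S) = (\<Sum>i\<in>S. trace (f i :: 'n::finite cmat))"
  by (induction S rule: infinite_finite_induct) (auto simp: trace_add trace_0[simplified])

lemma cmat_eqI: "(\<And>x. A *v x = B *v (x::complex^'n::finite)) \<Longrightarrow> A = B"
  using matrix_eq by blast

lemma outer_mv: "outer u v *v x = cinner v x *s u"
  by (simp add: outer_def cinner_def matrix_vector_mult_def vector_scalar_mult_def vec_eq_iff
      sum_distrib_left sum_distrib_right mult_ac)

lemma mult_outer: "A ** outer u v = outer (A *v u) v"
  by (simp add: outer_def matrix_matrix_mult_def matrix_vector_mult_def vec_eq_iff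
      sum_distrib_left sum_distrib_right mult_ac)

lemma outer_mult: "outer u v ** A = outer u (cadj A *v v)"
  by (simp add: outer_def matrix_matrix_mult_def matrix_vector_mult_def cadj_def vec_eq_iff
      sum_distrib_left mult_ac)

lemma outer_outer: "outer u v ** outer w z = smat (cinner v w) (outer u z)"
  by (simp add: outer_def smat_def matrix_matrix_mult_def cinner_def vec_eq_iff sum_distrib_left
      sum_distrib_right mult_ac)

lemma trace_outer: "trace (outer u v) = cinner v u"
  by (simp add: outer_def trace_def cinner_def mult.commute)

lemma smat_mv: "smat c A *v x = c *s (A *v x)"
  by (simp add: smat_def matrix_vector_mult_def vector_scalar_mult_def vec_eq_iff
      sum_distrib_left mult_ac)

lemma smat_one [simp]: "smat 1 M = M"
  by (simp add: smat_def vec_eq_iff)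

lemma mult_smat_mult: "C ** smat c X ** D = smat c (C ** X ** D)"
  by (simp add: smat_def matrix_matrix_mult_def vec_eq_iff sum_distrib_left sum_distrib_right
      mult_ac)

lemma opnorm_bound: "norm (A *v x) \<le> opnorm A * norm x"
  unfolding opnorm_def by (rule onorm) simp

lemma opnorm_le: "(\<And>x. norm (A *v x) \<le> b * norm x) \<Longrightarrow> opnorm A \<le> b"
  unfolding opnorm_def by (rule onorm_le)

lemma opnorm_nonneg: "0 \<le> opnorm A"
  unfolding opnorm_def by (rule onorm_pos_le) simp

lemma opnorm_eq_0_iff: "opnorm A = 0 \<longleftrightarrow> A = 0"
  unfolding opnorm_def by (auto simp: onorm_eq_0 intro: cmat_eqI)

lemma opnorm_zero [simp]: "opnorm 0 = 0"
  by (simp add: opnorm_eq_0_iff)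

lemma opnorm_add: "opnorm (A + B) \<le> opnorm A + opnorm B"
  unfolding opnorm_def matrix_vector_mult_add_rdistrib by (rule onorm_triangle) simp_all

lemma opnorm_sum: "opnorm (sum f S) \<le> (\<Sum>i\<in>S. opnorm (f i :: 'n::finite cmat))"
proof (induction S rule: infinite_finite_induct)
  case (insert x F)
  then show ?case using opnorm_add[of "f x" "sum f F"] by simp
qed auto

lemma opnorm_smat: "opnorm (smat c A) = cmod c * opnorm A"
proof (rule antisym)
  show "opnorm (smat c A) \<le> cmod c * opnorm A"
  proof (rule opnorm_le)
    fix x
    have "norm (smat c A *v x) \<le> cmod c * (opnorm A * norm x)"
      unfolding smat_mv norm_scale by (intro mult_left_mono opnorm_bound) simp
    then show "norm (smat c A *v x) \<le> cmod c * opnorm A * norm x"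
      by (simp add: mult_ac)
  qed
next
  show "cmod c * opnorm A \<le> opnorm (smat c A)"
  proof (cases "c = 0")
    case False
    have "opnorm A \<le> opnorm (smat c A) / cmod c"
    proof (rule opnorm_le)
      fix x
      have "cmod c * norm (A *v x) \<le> opnorm (smat c A) * norm x"
        using opnorm_bound[of "smat c A" x] by (simp add: smat_mv norm_scale)
      then show "norm (A *v x) \<le> opnorm (smat c A) / cmod c * norm x"
        using False by (simp add: field_simps mult_ac)
    qed
    then show ?thesis
      using False by (simp add: field_simps mult_ac)
  qed (simp add: opnorm_nonneg)
qed

lemma opnorm_outer_le: "opnorm (outer u v) \<le> norm u * norm v"
proof (rule opnorm_le)
  fix x
  have "norm (outer u v *v x) \<le> (norm v * norm x) * norm u"
    unfolding outer_mv norm_scale by (intro mult_right_mono norm_cinner_le) simp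
  then show "norm (outer u v *v x) \<le> norm u * norm v * norm x"
    by (simp add: mult_ac)
qed

lemma opnorm_smat_outer_unit: "norm e = 1 \<Longrightarrow> opnorm (smat c (outer e e)) = cmod c"
  using opnorm_outer_le[of e e] opnorm_bound[of "outer e e" e]
  by (simp add: opnorm_smat outer_mv norm_scale cinner_self)

definition orthonormal :: "(complex^'n::finite) set \<Rightarrow> bool" where
  "orthonormal S \<longleftrightarrow> finite S \<and> (\<forall>x\<in>S. \<forall>y\<in>S. cinner x y = (if x = y then 1 else 0))"

definition onb :: "(complex^'n::finite) set \<Rightarrow> bool" where
  "onb S \<longleftrightarrow> orthonormal S \<and> (\<forall>y. (\<forall>x\<in>S. cinner x y = 0) \<longrightarrow> y = 0)"

lemma orthonormal_cinner:
  "orthonormal S \<Longrightarrow> x \<in> S \<Longrightarrow> y \<in> S \<Longrightarrow> cinner x y = (if x = y then 1 else 0)"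
  by (simp add: orthonormal_def)

lemma onb_imp_orthonormal: "onb S \<Longrightarrow> orthonormal S"
  by (simp add: onb_def)

lemma orthonormal_norm: "orthonormal S \<Longrightarrow> x \<in> S \<Longrightarrow> norm x = 1"
  using orthonormal_cinner[of S x x] by (simp add: cinner_self_eq_1)

lemma card_orthonormal_le:
  fixes S :: "(complex^'n::finite) set"
  assumes "orthonormal S"
  shows "card S \<le> DIM(complex^'n)"
proof -
  have "pairwise orthogonal S"
    using assms by (auto simp: pairwise_def orthogonal_def inner_eq_Re_cinner orthonormal_def)
  moreover have "0 \<notin> S"
    using orthonormal_norm[OF assms] by force
  ultimately have "independent S"
    by (rule pairwise_orthogonal_independent)
  then show ?thesis
    using independent_bound by blast
qed

lemma orthonormal_insert:
  assumes S: "orthonormal S" and x: "norm x = 1" "\<forall>s\<in>S. cinner s x = 0"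
  shows "orthonormal (insert x S)" and "x \<notin> S"
proof -
  have xx: "cinner x x = 1"
    using x(1) by (simp add: cinner_self_eq_1)
  then show "x \<notin> S"
    using x(2) by force
  have "cinner x s = 0" if "s \<in> S" for s
    using x(2) that cinner_commute[of x s] by simp
  then show "orthonormal (insert x S)"
    using S x(2) xx \<open>x \<notin> S\<close> by (auto simp: orthonormal_def)
qed

lemma orthonormal_extend_onb:
  fixes S :: "(complex^'n::finite) set"
  assumes "orthonormal S" "\<forall>s\<in>S. P s"
    and step: "\<And>S y. orthonormal S \<Longrightarrow> \<forall>s\<in>S. P s \<Longrightarrow> y \<noteq> 0 \<Longrightarrow> \<forall>s\<in>S. cinner s y = 0 \<Longrightarrow>
                 \<exists>x. norm x = 1 \<and> (\<forall>s\<in>S. cinner s x = 0) \<and> P x"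
  shows "\<exists>T. S \<subseteq> T \<and> onb T \<and> (\<forall>s\<in>T. P s)"
  using assms(1,2)
proof (induction "DIM(complex^'n) - card S" arbitrary: S rule: less_induct)
  case less
  show ?case
  proof (cases "onb S")
    case True
    then show ?thesis
      using less.prems by blast
  next
    case False
    then obtain y where "y \<noteq> 0" "\<forall>s\<in>S. cinner s y = 0"
      using less.prems(1) unfolding onb_def by blast
    then obtain x where x: "norm x = 1" "\<forall>s\<in>S. cinner s x = 0" "P x"
      using step less.prems by blast
    have on: "orthonormal (insert x S)" and "x \<notin> S"
      using orthonormal_insert[OF less.prems(1) x(1,2)] by blast+
    have "DIM(complex^'n) - card (insert x S) < DIM(complex^'n) - card S"
      using card_orthonormal_le[OF on] \<open>x \<notin> S\<close> less.prems(1) by (simp add: orthonormal_def)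
    then show ?thesis
      using less.hyps[OF _ on] less.prems(2) x(3) by blast
  qed
qed

lemma norm_normalize: "y \<noteq> 0 \<Longrightarrow> norm (complex_of_real (1 / norm y) *s y) = 1"
  by (simp add: norm_scale norm_divide)

lemma orthonormal_subset_onb:
  assumes "orthonormal S"
  obtains T where "S \<subseteq> T" "onb T"
proof -
  have "\<exists>T. S \<subseteq> T \<and> onb T \<and> (\<forall>s\<in>T. True)"
  proof (rule orthonormal_extend_onb[OF assms])
    fix S' :: "(complex^'a) set" and y
    assume "y \<noteq> 0" "\<forall>s\<in>S'. cinner s y = 0"
    moreover define x where "x = complex_of_real (1 / norm y) *s y"
    ultimately have "norm x = 1" "\<forall>s\<in>S'. cinner s x = 0"
      using norm_normalize[of y] by (simp_all add: cinner_scale_right)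
    then show "\<exists>x. norm x = 1 \<and> (\<forall>s\<in>S'. cinner s x = 0) \<and> True"
      by blast
  qed simp
  then show ?thesis
    using that by blast
qed

lemma onb_expand:
  assumes S: "onb S"
  shows "(\<Sum>s\<in>S. cinner s y *s s) = y"
proof -
  have fin: "finite S" and on: "orthonormal S"
    using S by (simp_all add: onb_def orthonormal_def)
  have "cinner t (\<Sum>s\<in>S. cinner s y *s s) = cinner t y" if "t \<in> S" for t
  proof -
    have "cinner t (\<Sum>s\<in>S. cinner s y *s s) = (\<Sum>s\<in>S. if s = t then cinner t y else 0)"
      using orthonormal_cinner[OF on that]
      by (auto simp: cinner_sum_right cinner_scale_right intro!: sum.cong)
    then show ?thesis
      using fin that by simp
  qed
  then have "\<forall>t\<in>S. cinner t (y - (\<Sum>s\<in>S. cinner s y *s s)) = 0"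
    by (simp add: cinner_diff_right)
  then have "y - (\<Sum>s\<in>S. cinner s y *s s) = 0"
    using S unfolding onb_def by blast
  then show ?thesis
    by simp
qed

lemma onb_sum_outer: "onb S \<Longrightarrow> (\<Sum>s\<in>S. outer s s) = mat 1"
  by (intro cmat_eqI) (simp add: sum_matrix_vector_mult outer_mv onb_expand)

lemma onb_matrix_expand: "onb S \<Longrightarrow> (\<Sum>s\<in>S. outer (A *v s) s) = A"
  using matrix_mult_sum_right[of A "\<lambda>s. outer s s" S] by (simp add: onb_sum_outer mult_outer)

lemma mat_eq_onb:
  fixes P Q :: "'n::finite cmat"
  assumes S: "onb S" and eq: "\<And>s. s \<in> S \<Longrightarrow> P *v s = Q *v s"
  shows "P = Q"
proof (rule cmat_eqI)
  fix x
  have expand: "M *v x = (\<Sum>s\<in>S. cinner s x *s (M *v s))" for M :: "'n cmat"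
    using arg_cong[OF onb_expand[OF S, of x], of "(*v) M"] by (simp add: vec.sum vec.scale)
  have "(\<Sum>s\<in>S. cinner s x *s (P *v s)) = (\<Sum>s\<in>S. cinner s x *s (Q *v s))"
    using eq by (intro sum.cong) auto
  then show "P *v x = Q *v x"
    using expand[of P] expand[of Q] by simp
qed

lemma card_onb:
  fixes S :: "(complex^'n::finite) set"
  assumes "onb S"
  shows "card S = CARD('n)"
proof -
  have "of_nat (card S) = trace (\<Sum>s\<in>S. outer s s)"
    using assms orthonormal_cinner[of S]
    by (simp add: onb_def trace_sum trace_outer)
  also have "\<dots> = of_nat CARD('n)"
    by (simp add: onb_sum_outer[OF assms] trace_I)
  finally show ?thesis
    by simp
qed

lemma trace_onb:
  assumes "onb S"
  shows "trace B = (\<Sum>s\<in>S. cinner s (B *v s))"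
proof -
  have "trace B = trace (\<Sum>s\<in>S. outer (B *v s) s)"
    by (simp add: onb_matrix_expand[OF assms])
  then show ?thesis
    by (simp add: trace_sum trace_outer)
qed

lemma orthonormal_sum_outer_mv:
  assumes "orthonormal T" "t \<in> T"
  shows "(\<Sum>s\<in>T. outer (f s) s) *v t = f t"
proof -
  have "(\<Sum>s\<in>T. outer (f s) s) *v t = (\<Sum>s\<in>T. if s = t then f t else 0)"
    using orthonormal_cinner[OF assms(1) _ assms(2)]
    by (auto simp: sum_matrix_vector_mult outer_mv intro!: sum.cong)
  then show ?thesis
    using assms by (simp add: orthonormal_def)
qed

lemma orthonormal_diag_mv:
  "orthonormal T \<Longrightarrow> t \<in> T \<Longrightarrow> (\<Sum>s\<in>T. smat (c s) (outer s s)) *v t = c t *s t"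
  using orthonormal_sum_outer_mv[of T t "\<lambda>s. c s *s s"]
  by (simp add: outer_def smat_def vector_scalar_mult_def mult.assoc)

section \<open>Spectral theorem for commuting Hermitian matrices\<close>

lemma linear_coeff_zero_if_quadratic_nonpos:
  fixes a b :: real
  assumes "\<And>t. 2 * t * a + t\<^sup>2 * b \<le> 0"
  shows "a = 0"
proof (rule ccontr)
  assume "a \<noteq> 0"
  define t where "t = \<bar>a\<bar> / (\<bar>b\<bar> + 1)"
  have "t > 0"
    using \<open>a \<noteq> 0\<close> by (simp add: t_def)
  have "- (t\<^sup>2 * b) \<le> t\<^sup>2 * \<bar>b\<bar>"
    using mult_left_mono[of "-b" "\<bar>b\<bar>" "t\<^sup>2"] by simp
  then have "2 * t * \<bar>a\<bar> \<le> t\<^sup>2 * \<bar>b\<bar>"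
    using assms[of t] assms[of "-t"] by (cases "a \<ge> 0") (simp_all add: abs_of_nonneg abs_of_neg)
  then have "2 * \<bar>a\<bar> \<le> t * \<bar>b\<bar>"
    using \<open>t > 0\<close> by (simp add: power2_eq_square mult.assoc)
  moreover have "t * \<bar>b\<bar> < \<bar>a\<bar>"
    using \<open>a \<noteq> 0\<close> unfolding t_def by (simp add: field_simps)
  ultimately show False
    using \<open>a \<noteq> 0\<close> by simp
qed

lemma scaleR_eq_scale: "r *\<^sub>R (x::complex^'n::finite) = complex_of_real r *s x"
  unfolding vec_eq_iff vector_scalar_mult_def vec_lambda_beta vector_scaleR_component
  by (simp only: scaleR_conv_of_real simp_thms)

lemma vec_subspace_imp_subspace: "vec.subspace V \<Longrightarrow> subspace (V :: (complex^'n::finite) set)"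
  by (auto simp: subspace_def vec.subspace_def scaleR_eq_scale)

definition rayleigh_maximiser :: "'n::finite cmat \<Rightarrow> (complex^'n) set \<Rightarrow> complex^'n \<Rightarrow> bool"
  where "rayleigh_maximiser H V x \<longleftrightarrow> x \<in> V \<and> norm x = 1 \<and>
    (\<forall>z\<in>V. norm z = 1 \<longrightarrow> Re (cinner z (H *v z)) \<le> Re (cinner x (H *v x)))"

lemma rayleigh_maximiser_exists:
  fixes H :: "'n::finite cmat"
  assumes V: "vec.subspace V" and x0: "x0 \<in> V" "x0 \<noteq> 0"
  obtains x where "rayleigh_maximiser H V x"
proof -
  define K where "K = V \<inter> sphere 0 1"
  have "compact K"
    unfolding K_def by (intro closed_Int_compact closed_subspace vec_subspace_imp_subspace V
        compact_sphere)
  moreover have "complex_of_real (1 / norm x0) *s x0 \<in> K"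
    using x0 norm_normalize[of x0] vec.subspace_scale[OF V] by (simp add: K_def)
  then have "K \<noteq> {}"
    by blast
  moreover have "continuous_on K (\<lambda>z. Re (cinner z (H *v z)))"
    unfolding cinner_def
    by (intro continuous_on_Re continuous_on_sum ballI continuous_on_mult continuous_on_cnj
        continuous_on_component matrix_vector_mult_linear_continuous_on continuous_on_id)
  ultimately obtain x where "x \<in> K" "\<forall>z\<in>K. Re (cinner z (H *v z)) \<le> Re (cinner x (H *v x))"
    using continuous_attains_sup by blast
  then show ?thesis
    by (intro that) (auto simp: K_def rayleigh_maximiser_def)
qed

lemma rayleigh_maximiser_le:
  assumes V: "vec.subspace V" and x: "rayleigh_maximiser H V x" and "z \<in> V"
  shows "Re (cinner z (H *v z)) \<le> Re (cinner x (H *v x)) * (norm z)\<^sup>2"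
proof (cases "z = 0")
  case False
  define c where "c = complex_of_real (1 / norm z)"
  have "Re (cinner (c *s z) (H *v (c *s z))) \<le> Re (cinner x (H *v x))"
    using False norm_normalize[of z] vec.subspace_scale[OF V \<open>z \<in> V\<close>] x
    unfolding rayleigh_maximiser_def c_def by simp
  moreover have "Re (cinner (c *s z) (H *v (c *s z))) = Re (cinner z (H *v z)) / (norm z)\<^sup>2"
    by (simp add: c_def vec.scale cinner_scale_left cinner_scale_right power2_eq_square)
  ultimately show ?thesis
    using False by (simp add: field_simps)
qed simp

text \<open>First-order condition at a maximiser: perturbing \<open>x\<close> to \<open>x + t w\<close> with real \<open>t\<close>
  shows that the linear term \<open>2 t Re\<langle>w, H x\<rangle>\<close> must vanish.\<close>

lemma rayleigh_maximiser_orthogonal_Re: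
  fixes H :: "'n::finite cmat"
  assumes H: "hermitian H" and V: "vec.subspace V" and x: "rayleigh_maximiser H V x"
    and wV: "w \<in> V" and wx: "cinner x w = 0"
  shows "Re (cinner w (H *v x)) = 0"
proof -
  define f where "f z = Re (cinner z (H *v z))" for z
  have xV: "x \<in> V" and xx: "cinner x x = 1"
    using x by (simp_all add: rayleigh_maximiser_def cinner_self_eq_1)
  show ?thesis
  proof (rule linear_coeff_zero_if_quadratic_nonpos[where b = "f w - f x * (norm w)\<^sup>2"])
    fix t :: real
    define z where "z = x + complex_of_real t *s w"
    have wx': "cinner w x = 0"
      using wx cinner_commute[of w x] by simp
    have "cinner z z = 1 + complex_of_real (t\<^sup>2 * (norm w)\<^sup>2)"
      using xx wx wx' unfolding z_def
      by (simp add: cinner_add_left cinner_add_right cinner_scale_left cinner_scale_right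
          cinner_self[of w] power2_eq_square)
    then have nz: "(norm z)\<^sup>2 = 1 + t\<^sup>2 * (norm w)\<^sup>2"
      by (metis cinner_self of_real_1 of_real_add of_real_eq_iff)
    have "cinner x (H *v w) = cnj (cinner w (H *v x))"
      using cinner_hermitian[OF H] cinner_commute by metis
    then have "f z = f x + 2 * t * Re (cinner w (H *v x)) + t\<^sup>2 * f w"
      unfolding f_def z_def
      by (simp add: vec.add vec.scale cinner_add_left cinner_add_right cinner_scale_left
          cinner_scale_right power2_eq_square algebra_simps)
    moreover have "f z \<le> f x * (norm z)\<^sup>2"
      unfolding f_def z_def
      by (intro rayleigh_maximiser_le[OF V x] vec.subspace_add[OF V xV] vec.subspace_scale[OF V wV])
    ultimately show "2 * t * Re (cinner w (H *v x)) + t\<^sup>2 * (f w - f x * (norm w)\<^sup>2) \<le> 0"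
      using nz by (simp add: algebra_simps)
  qed
qed

lemma rayleigh_maximiser_orthogonal:
  fixes H :: "'n::finite cmat"
  assumes H: "hermitian H" and V: "vec.subspace V" and x: "rayleigh_maximiser H V x"
    and yV: "y \<in> V" and yx: "cinner x y = 0"
  shows "cinner y (H *v x) = 0"
proof -
  have "Re (cinner (\<i> *s y) (H *v x)) = 0"
    by (rule rayleigh_maximiser_orthogonal_Re[OF H V x])
      (simp_all add: vec.subspace_scale[OF V yV] cinner_scale_right yx)
  then have "Im (cinner y (H *v x)) = 0"
    by (simp add: cinner_scale_left)
  with rayleigh_maximiser_orthogonal_Re[OF H V x yV yx] show ?thesis
    by (simp add: complex_eq_iff)
qed

lemma hermitian_eigenvector_in_subspace:
  fixes H :: "'n::finite cmat"
  assumes H: "hermitian H" and V: "vec.subspace V" and inv: "\<And>z. z \<in> V \<Longrightarrow> H *v z \<in> V"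
    and "x0 \<in> V" "x0 \<noteq> 0"
  obtains x c where "x \<in> V" "norm x = 1" "H *v x = c *s x"
proof -
  obtain x where x: "rayleigh_maximiser H V x"
    using rayleigh_maximiser_exists[OF V \<open>x0 \<in> V\<close> \<open>x0 \<noteq> 0\<close>] by blast
  then have xV: "x \<in> V" and nx: "norm x = 1"
    by (simp_all add: rayleigh_maximiser_def)
  define w where "w = H *v x - cinner x (H *v x) *s x"
  have wV: "w \<in> V"
    unfolding w_def by (intro vec.subspace_diff[OF V] inv xV vec.subspace_scale[OF V])
  have "cinner x w = 0"
    using nx by (simp add: w_def cinner_diff_right cinner_scale_right cinner_self_eq_1[symmetric])
  then have "cinner w x = 0" "cinner w (H *v x) = 0"
    using cinner_commute[of w x] rayleigh_maximiser_orthogonal[OF H V x wV] by simp_all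
  then have "cinner w w = 0"
    by (simp add: w_def cinner_diff_right cinner_scale_right)
  then have "H *v x = cinner x (H *v x) *s x"
    by (simp add: w_def)
  then show ?thesis
    using that xV nx by blast
qed

lemma hermitian_orthogonal_eigenvectors:
  assumes H: "hermitian H" and eig: "\<forall>s\<in>S. \<exists>c. H *v s = c *s s" and z: "\<forall>s\<in>S. cinner s z = 0"
  shows "\<forall>s\<in>S. cinner s (H *v z) = 0"
proof
  fix s assume "s \<in> S"
  then obtain c where "H *v s = c *s s"
    using eig by blast
  then show "cinner s (H *v z) = 0"
    using z \<open>s \<in> S\<close> by (simp add: cinner_hermitian[OF H] cinner_scale_left)
qed

lemma vec_subspace_eigenspace: "vec.subspace {z. H *v z = c *s (z :: complex^'n::finite)}"
  by (auto simp: vec.subspace_def matrix_vector_right_distrib vector_scalar_commute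
      vector_add_ldistrib vector_smult_assoc mult.commute)

lemma commuting_eigenspace_invariant:
  fixes H1 H2 :: "'n::finite cmat"
  assumes "H1 ** H2 = H2 ** H1" "H1 *v y = c *s y"
  shows "H1 *v (H2 *v y) = c *s (H2 *v y)"
proof -
  have "H1 *v (H2 *v y) = H2 *v (H1 *v y)"
    by (simp add: matrix_vector_mul_assoc assms(1))
  then show ?thesis
    using assms(2) by (simp add: vector_scalar_commute)
qed

lemma commuting_hermitian_common_eigenvector:
  fixes H1 H2 :: "'n::finite cmat"
  assumes h1: "hermitian H1" and h2: "hermitian H2" and comm: "H1 ** H2 = H2 ** H1"
    and V: "vec.subspace V" and inv1: "\<And>z. z \<in> V \<Longrightarrow> H1 *v z \<in> V"
    and inv2: "\<And>z. z \<in> V \<Longrightarrow> H2 *v z \<in> V" and "x0 \<in> V" "x0 \<noteq> 0"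
  obtains x a b where "x \<in> V" "norm x = 1" "H1 *v x = a *s x" "H2 *v x = b *s x"
proof -
  obtain x1 a where x1: "x1 \<in> V" "norm x1 = 1" "H1 *v x1 = a *s x1"
    using hermitian_eigenvector_in_subspace[OF h1 V inv1 \<open>x0 \<in> V\<close> \<open>x0 \<noteq> 0\<close>] by blast
  define W where "W = V \<inter> {z. H1 *v z = a *s z}"
  have W: "vec.subspace W"
    unfolding W_def by (rule vec.subspace_inter[OF V vec_subspace_eigenspace])
  have invW: "H2 *v z \<in> W" if "z \<in> W" for z
    using that inv2 commuting_eigenspace_invariant[OF comm] by (auto simp: W_def)
  have "x1 \<in> W" "x1 \<noteq> 0"
    using x1 by (auto simp: W_def)
  then obtain x b where "x \<in> W" "norm x = 1" "H2 *v x = b *s x"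
    using hermitian_eigenvector_in_subspace[OF h2 W invW] by blast
  then show ?thesis
    using that by (auto simp: W_def)
qed

theorem commuting_hermitian_eigenbasis:
  fixes H1 H2 :: "'n::finite cmat"
  assumes h1: "hermitian H1" and h2: "hermitian H2" and comm: "H1 ** H2 = H2 ** H1"
  obtains T where "onb T" "\<And>s. s \<in> T \<Longrightarrow> (\<exists>a. H1 *v s = a *s s) \<and> (\<exists>b. H2 *v s = b *s s)"
proof -
  have "\<exists>T. {} \<subseteq> T \<and> onb T \<and> (\<forall>s\<in>T. (\<exists>a. H1 *v s = a *s s) \<and> (\<exists>b. H2 *v s = b *s s))"
  proof (rule orthonormal_extend_onb)
    fix S and y :: "complex^'n"
    assume eig: "\<forall>s\<in>S. (\<exists>a. H1 *v s = a *s s) \<and> (\<exists>b. H2 *v s = b *s s)"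
      and y: "y \<noteq> 0" "\<forall>s\<in>S. cinner s y = 0"
    define V where "V = {z. \<forall>s\<in>S. cinner s z = 0}"
    have V: "vec.subspace V"
      by (simp add: V_def vec.subspace_def cinner_add_right cinner_scale_right)
    have "\<forall>s\<in>S. \<exists>a. H1 *v s = a *s s" "\<forall>s\<in>S. \<exists>b. H2 *v s = b *s s"
      using eig by blast+
    then have "H1 *v z \<in> V" "H2 *v z \<in> V" if "z \<in> V" for z
      using hermitian_orthogonal_eigenvectors[OF h1] hermitian_orthogonal_eigenvectors[OF h2] that
      unfolding V_def by simp_all
    moreover have "y \<in> V"
      using y(2) by (simp add: V_def)
    ultimately obtain x a b where "x \<in> V" "norm x = 1" "H1 *v x = a *s x" "H2 *v x = b *s x"
      using commuting_hermitian_common_eigenvector[OF h1 h2 comm V _ _ _ y(1)] by blast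
    then show "\<exists>x. norm x = 1 \<and> (\<forall>s\<in>S. cinner s x = 0)
                 \<and> (\<exists>a. H1 *v x = a *s x) \<and> (\<exists>b. H2 *v x = b *s x)"
      by (auto simp: V_def)
  qed (simp_all add: orthonormal_def)
  then show ?thesis
    using that by blast
qed

corollary hermitian_eigenbasis:
  assumes "hermitian H"
  obtains T where "onb T" "\<And>s. s \<in> T \<Longrightarrow> \<exists>c. H *v s = c *s s"
proof -
  obtain T where "onb T" "\<And>s. s \<in> T \<Longrightarrow> (\<exists>a. H *v s = a *s s) \<and> (\<exists>b. H *v s = b *s s)"
    using commuting_hermitian_eigenbasis[OF assms assms refl] by blast
  then show ?thesis
    using that by blast
qed

lemma eigenvalue_eq_cinner: "norm s = 1 \<Longrightarrow> H *v s = c *s s \<Longrightarrow> c = cinner s (H *v s)"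
  by (simp add: cinner_scale_right cinner_self_eq_1[symmetric])

lemma gram_eigenbasis:
  fixes A :: "'n::finite cmat"
  obtains T where "onb T"
    "\<And>s. s \<in> T \<Longrightarrow> (cadj A ** A) *v s = complex_of_real ((norm (A *v s))\<^sup>2) *s s"
proof -
  obtain T where T: "onb T" and eig: "\<And>s. s \<in> T \<Longrightarrow> \<exists>c. (cadj A ** A) *v s = c *s s"
    using hermitian_eigenbasis[OF hermitian_cadj_mult_self] by blast
  have "(cadj A ** A) *v s = complex_of_real ((norm (A *v s))\<^sup>2) *s s" if "s \<in> T" for s
  proof -
    obtain c where c: "(cadj A ** A) *v s = c *s s"
      using eig[OF \<open>s \<in> T\<close>] by blast
    have "norm s = 1"
      using orthonormal_norm[OF onb_imp_orthonormal[OF T] that] .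
    then have "c = cinner s ((cadj A ** A) *v s)"
      using c by (rule eigenvalue_eq_cinner)
    also have "\<dots> = cinner (A *v s) (A *v s)"
      by (simp add: matrix_vector_mul_assoc[symmetric] cinner_cadj)
    finally show ?thesis
      using c by (simp add: cinner_self)
  qed
  then show ?thesis
    using that T by blast
qed

lemma psd_diag:
  assumes "\<And>s. s \<in> T \<Longrightarrow> 0 \<le> \<sigma> s"
  shows "psd (\<Sum>s\<in>T. smat (complex_of_real (\<sigma> s)) (outer s s))"
proof -
  have "cinner x ((\<Sum>s\<in>T. smat (complex_of_real (\<sigma> s)) (outer s s)) *v x)
        = (\<Sum>s\<in>T. complex_of_real (\<sigma> s * (cmod (cinner s x))\<^sup>2))" for x
  proof -
    have "cinner s x * cinner x s = complex_of_real ((cmod (cinner s x))\<^sup>2)" for s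
      using cinner_commute[of x s] complex_norm_square[of "cinner s x"] by simp
    then show ?thesis
      by (simp add: sum_matrix_vector_mult smat_mv outer_mv cinner_sum_right cinner_scale_right
          mult.assoc)
  qed
  then show ?thesis
    using assms by (simp add: psd_def cadj_sum cadj_smat cadj_outer Re_sum sum_nonneg)
qed

lemma psd_sqrt_eigenvector:
  assumes psd: "psd B" and sq: "B ** B = M" and s: "M *v s = complex_of_real (\<sigma>\<^sup>2) *s s"
    and "\<sigma> \<ge> 0"
  shows "B *v s = complex_of_real \<sigma> *s s"
proof -
  have H: "hermitian B"
    using psd by (simp add: psd_def hermitian_def)
  define w where "w = B *v s - complex_of_real \<sigma> *s s"
  have Bw: "B *v w = - (complex_of_real \<sigma> *s w)"
  proof -
    have "B *v w = M *v s - complex_of_real \<sigma> *s (B *v s)"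
      by (simp add: w_def vec.diff vec.scale matrix_vector_mul_assoc sq)
    then show ?thesis
      unfolding s w_def by (simp add: vec_eq_iff vector_scalar_mult_def algebra_simps power2_eq_square)
  qed
  have "w = 0"
  proof (cases "\<sigma> = 0")
    case True
    then have "cinner w w = cinner s (B *v w)"
      by (simp add: w_def cinner_hermitian[OF H])
    then show ?thesis
      using True Bw by simp
  next
    case False
    have "0 \<le> Re (cinner w (B *v w))"
      using psd by (simp add: psd_def)
    also have "Re (cinner w (B *v w)) = - \<sigma> * (norm w)\<^sup>2"
      by (simp add: Bw cinner_minus_right cinner_scale_right cinner_self)
    finally show ?thesis
      using False \<open>\<sigma> \<ge> 0\<close> by (simp add: mult_le_0_iff)
  qed
  then show ?thesis
    by (simp add: w_def)
qed

lemma mabs_gram_eigenbasis: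
  fixes A :: "'n::finite cmat"
  assumes T: "onb T"
    and eig: "\<And>s. s \<in> T \<Longrightarrow> (cadj A ** A) *v s = complex_of_real ((norm (A *v s))\<^sup>2) *s s"
  shows "mabs A = (\<Sum>s\<in>T. smat (complex_of_real (norm (A *v s))) (outer s s))"
proof -
  define B where "B = (\<Sum>s\<in>T. smat (complex_of_real (norm (A *v s))) (outer s s))"
  have Bs: "B *v s = complex_of_real (norm (A *v s)) *s s" if "s \<in> T" for s
    using T that unfolding B_def onb_def by (simp add: orthonormal_diag_mv)
  have "psd B"
    unfolding B_def by (rule psd_diag) simp
  moreover have "B ** B = cadj A ** A"
    by (rule mat_eq_onb[OF T])
      (simp add: matrix_vector_mul_assoc[of B B, symmetric] Bs vec.scale eig vector_smult_assoc
        power2_eq_square)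
  moreover have "B' = B" if "psd B'" "B' ** B' = cadj A ** A" for B'
    by (rule mat_eq_onb[OF T]) (simp add: Bs psd_sqrt_eigenvector[OF that eig])
  ultimately show ?thesis
    unfolding mabs_def B_def[symmetric] by (intro the_equality) blast+
qed

lemma mabs_mv_gram_eigenbasis:
  assumes T: "onb T"
    and eig: "\<And>s. s \<in> T \<Longrightarrow> (cadj A ** A) *v s = complex_of_real ((norm (A *v s))\<^sup>2) *s s"
    and "t \<in> T"
  shows "mabs A *v t = complex_of_real (norm (A *v t)) *s t"
  using assms orthonormal_diag_mv[of T t] by (simp add: mabs_gram_eigenbasis onb_def)

lemma trnorm_gram_eigenbasis:
  assumes T: "onb T"
    and eig: "\<And>s. s \<in> T \<Longrightarrow> (cadj A ** A) *v s = complex_of_real ((norm (A *v s))\<^sup>2) *s s"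
  shows "trnorm A = (\<Sum>s\<in>T. norm (A *v s))"
proof -
  have "cinner s (mabs A *v s) = complex_of_real (norm (A *v s))" if "s \<in> T" for s
    using T that orthonormal_cinner[of T s s]
    by (simp add: mabs_mv_gram_eigenbasis[OF T eig] cinner_scale_right onb_def)
  then show ?thesis
    by (simp add: trnorm_def trace_onb[OF T] Re_sum)
qed

lemma psd_mabs: "psd (mabs A)"
proof -
  obtain T where "onb T"
    "\<And>s. s \<in> T \<Longrightarrow> (cadj A ** A) *v s = complex_of_real ((norm (A *v s))\<^sup>2) *s s"
    using gram_eigenbasis by blast
  then show ?thesis
    by (simp add: mabs_gram_eigenbasis psd_diag)
qed

lemma psd_cmod_cinner:
  assumes "psd B"
  shows "cmod (cinner x (B *v x)) = Re (cinner x (B *v x))"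
proof -
  have "cinner x (B *v x) = cnj (cinner x (B *v x))"
    using assms cinner_commute[of x "B *v x"] unfolding psd_def by (metis cinner_adj)
  then have "Im (cinner x (B *v x)) = 0"
    by (simp add: complex_eq_iff)
  then show ?thesis
    using assms by (simp add: cmod_eq_Re psd_def)
qed
section \<open>Polar decomposition and normal matrices\<close>

lemma gram_eigenbasis_orthogonal_images:
  assumes T: "onb T"
    and eig: "\<And>s. s \<in> T \<Longrightarrow> (cadj A ** A) *v s = complex_of_real ((norm (A *v s))\<^sup>2) *s s"
    and "s \<in> T" "t \<in> T" "s \<noteq> t"
  shows "cinner (A *v s) (A *v t) = 0"
proof -
  have "cinner (A *v s) (A *v t) = cinner s ((cadj A ** A) *v t)"
    by (simp add: matrix_vector_mul_assoc[symmetric] cinner_cadj)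
  then show ?thesis
    using eig[OF \<open>t \<in> T\<close>] orthonormal_cinner[OF onb_imp_orthonormal[OF T] \<open>s \<in> T\<close> \<open>t \<in> T\<close>]
      \<open>s \<noteq> t\<close>
    by (simp add: cinner_scale_right)
qed

lemma orthonormal_normalized_image:
  assumes "finite S" and nz: "\<And>s. s \<in> S \<Longrightarrow> v s \<noteq> 0"
    and orth: "\<And>s t. s \<in> S \<Longrightarrow> t \<in> S \<Longrightarrow> s \<noteq> t \<Longrightarrow> cinner (v s) (v t) = 0"
  shows "orthonormal ((\<lambda>s. complex_of_real (1 / norm (v s)) *s v s) ` S)"
    and "inj_on (\<lambda>s. complex_of_real (1 / norm (v s)) *s v s) S"
proof -
  define u where "u = (\<lambda>s. complex_of_real (1 / norm (v s)) *s v s)"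
  have uu: "cinner (u s) (u t) = (if s = t then 1 else 0)" if "s \<in> S" "t \<in> S" for s t
  proof (cases "s = t")
    case True
    then show ?thesis
      using norm_normalize[OF nz[OF that(1)]] by (simp add: u_def cinner_self_eq_1)
  next
    case False
    then show ?thesis
      using orth[OF that False] by (simp add: u_def cinner_scale_left cinner_scale_right)
  qed
  show inj: "inj_on u S"
    by (rule inj_onI) (metis uu zero_neq_one)
  show "orthonormal (u ` S)"
    using \<open>finite S\<close> uu inj by (auto simp: orthonormal_def inj_on_eq_iff)
qed

lemma onb_extend_bij:
  fixes T R1 :: "(complex^'n::finite) set"
  assumes T: "onb T" and "T1 \<subseteq> T" and R1: "orthonormal R1" and u: "bij_betw u T1 R1"
  obtains R f where "onb R" "bij_betw f T R" "\<And>s. s \<in> T1 \<Longrightarrow> f s = u s"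
proof -
  obtain R where "R1 \<subseteq> R" and R: "onb R"
    using orthonormal_subset_onb[OF R1] by blast
  have fin: "finite T" "finite R"
    using T R by (simp_all add: onb_def orthonormal_def)
  have "card (R - R1) = card (T - T1)"
    using card_onb[OF T] card_onb[OF R] bij_betw_same_card[OF u] \<open>R1 \<subseteq> R\<close> \<open>T1 \<subseteq> T\<close> fin
    by (simp add: card_Diff_subset finite_subset)
  then obtain g where g: "bij_betw g (T - T1) (R - R1)"
    using finite_same_card_bij fin by (metis finite_Diff)
  define f where "f s = (if s \<in> T1 then u s else g s)" for s
  have "bij_betw f (T1 \<union> (T - T1)) (R1 \<union> (R - R1))"
    unfolding f_def by (rule bij_betw_disjoint_Un[OF u g]) auto
  then have "bij_betw f T R"
    using \<open>T1 \<subseteq> T\<close> \<open>R1 \<subseteq> R\<close> by (simp add: Un_absorb1)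
  then show ?thesis
    using that R by (simp add: f_def)
qed

lemma unitary_onb_bij:
  assumes T: "onb T" and R: "onb R" and f: "bij_betw f T R"
  shows "unitary (\<Sum>s\<in>T. outer (f s) s)"
    and "t \<in> T \<Longrightarrow> (\<Sum>s\<in>T. outer (f s) s) *v t = f t"
proof -
  define U where "U = (\<Sum>s\<in>T. outer (f s) s)"
  have Ut: "U *v t = f t" if "t \<in> T" for t
    unfolding U_def by (rule orthonormal_sum_outer_mv[OF onb_imp_orthonormal[OF T] that])
  have fR: "f t \<in> R" if "t \<in> T" for t
    using f that by (auto simp: bij_betw_def)
  have ff: "cinner (f s) (f t) = (if s = t then 1 else 0)" if "s \<in> T" "t \<in> T" for s t
    using orthonormal_cinner[OF onb_imp_orthonormal[OF R] fR[OF that(1)] fR[OF that(2)]]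
      f that by (auto simp: bij_betw_def inj_on_eq_iff)
  have cUf: "cadj U *v f t = t" if "t \<in> T" for t
  proof -
    have "cadj U *v f t = (\<Sum>s\<in>T. if s = t then t else 0)"
      using ff[OF _ that]
      by (auto simp: U_def cadj_sum cadj_outer sum_matrix_vector_mult outer_mv intro!: sum.cong)
    then show ?thesis
      using that T by (simp add: onb_def orthonormal_def)
  qed
  have "cadj U ** U = mat 1"
    by (rule mat_eq_onb[OF T]) (simp add: matrix_vector_mul_assoc[symmetric] Ut cUf)
  moreover have "U ** cadj U = mat 1"
  proof (rule mat_eq_onb[OF R])
    fix r assume "r \<in> R"
    then obtain t where "t \<in> T" "r = f t"
      using f by (auto simp: bij_betw_def)
    then show "(U ** cadj U) *v r = mat 1 *v r"
      by (simp add: matrix_vector_mul_assoc[symmetric] Ut cUf)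
  qed
  ultimately show "unitary U"
    by (simp add: unitary_def)
  show "t \<in> T \<Longrightarrow> U *v t = f t"
    by (rule Ut)
qed

theorem polar_decomposition:
  fixes A :: "'n::finite cmat"
  obtains U where "unitary U" "U ** mabs A = A"
proof -
  obtain T where T: "onb T"
    and eig: "\<And>s. s \<in> T \<Longrightarrow> (cadj A ** A) *v s = complex_of_real ((norm (A *v s))\<^sup>2) *s s"
    using gram_eigenbasis by blast
  define T1 where "T1 = {s \<in> T. A *v s \<noteq> 0}"
  define u where "u = (\<lambda>s. complex_of_real (1 / norm (A *v s)) *s (A *v s))"
  have fin: "finite T1"
    using T by (simp add: T1_def onb_def orthonormal_def)
  have nz: "A *v s \<noteq> 0" if "s \<in> T1" for s
    using that by (simp add: T1_def)
  have orth: "cinner (A *v s) (A *v t) = 0" if "s \<in> T1" "t \<in> T1" "s \<noteq> t" for s t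
    using gram_eigenbasis_orthogonal_images[OF T eig] that by (simp add: T1_def)
  have "orthonormal (u ` T1)" "inj_on u T1"
    unfolding u_def using orthonormal_normalized_image[of T1 "(*v) A", OF fin nz orth] by simp_all
  moreover have "T1 \<subseteq> T"
    by (auto simp: T1_def)
  ultimately obtain R f where R: "onb R" and f: "bij_betw f T R"
    and fu: "\<And>s. s \<in> T1 \<Longrightarrow> f s = u s"
    using onb_extend_bij[OF T _ _ inj_on_imp_bij_betw, of T1 u] by blast
  define U where "U = (\<Sum>s\<in>T. outer (f s) s)"
  have "U ** mabs A = A"
  proof (rule mat_eq_onb[OF T])
    fix t assume "t \<in> T"
    have "(U ** mabs A) *v t = complex_of_real (norm (A *v t)) *s f t"
      by (simp add: U_def matrix_vector_mul_assoc[symmetric] vec.scale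
          mabs_mv_gram_eigenbasis[OF T eig \<open>t \<in> T\<close>] unitary_onb_bij(2)[OF T R f \<open>t \<in> T\<close>])
    also have "\<dots> = A *v t"
      using \<open>t \<in> T\<close> fu by (cases "A *v t = 0") (simp_all add: T1_def u_def vector_smult_assoc)
    finally show "(U ** mabs A) *v t = A *v t" .
  qed
  then show ?thesis
    using that unitary_onb_bij(1)[OF T R f] by (simp add: U_def)
qed

lemma unitary_norm: "unitary U \<Longrightarrow> norm (U *v x) = norm x"
proof -
  assume "unitary U"
  then have "cinner (U *v x) (U *v x) = cinner x x"
    by (simp add: cinner_cadj[symmetric] matrix_vector_mul_assoc unitary_def)
  then have "(norm (U *v x))\<^sup>2 = (norm x)\<^sup>2"
    by (metis cinner_self of_real_eq_iff)
  then show ?thesis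
    by (simp add: power2_eq_iff_nonneg)
qed

theorem normal_eigenbasis:
  fixes W :: "'n::finite cmat"
  assumes normal: "cadj W ** W = W ** cadj W"
  obtains X where "onb X" "\<And>x. x \<in> X \<Longrightarrow> \<exists>c. W *v x = c *s x"
proof -
  define H1 where "H1 = W + cadj W"
  define H2 where "H2 = smat \<i> (W - cadj W)"
  have h1: "hermitian H1"
    by (simp add: hermitian_def H1_def cadj_add add.commute)
  have h2: "hermitian H2"
    by (simp add: hermitian_def H2_def cadj_def smat_def vec_eq_iff algebra_simps)
  have H1v: "H1 *v y = W *v y + cadj W *v y" for y
    by (simp add: H1_def matrix_vector_mult_add_rdistrib)
  have H2v: "H2 *v y = \<i> *s (W *v y - cadj W *v y)" for y
    by (simp add: H2_def smat_mv matrix_vector_mult_diff_rdistrib)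
  have WW: "W *v (cadj W *v y) = cadj W *v (W *v y)" for y
    by (simp add: matrix_vector_mul_assoc normal)
  have "H1 ** H2 = H2 ** H1"
    by (rule cmat_eqI) (simp add: matrix_vector_mul_assoc[symmetric] H1v H2v vec.add vec.diff
        vec.scale WW; simp add: vec_eq_iff vector_scalar_mult_def algebra_simps)
  then obtain X where X: "onb X"
    and eig: "\<And>x. x \<in> X \<Longrightarrow> (\<exists>a. H1 *v x = a *s x) \<and> (\<exists>b. H2 *v x = b *s x)"
    using commuting_hermitian_eigenbasis[OF h1 h2] by blast
  have W: "W = smat (1 / 2) (H1 - smat \<i> H2)"
    by (simp add: H1_def H2_def smat_def cadj_def vec_eq_iff algebra_simps)
  have "W *v x = ((a - \<i> * b) / 2) *s x" if "H1 *v x = a *s x" "H2 *v x = b *s x" for x a b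
  proof -
    have "W *v x = (1 / 2) *s (H1 *v x - \<i> *s (H2 *v x))"
      by (subst W) (simp add: smat_mv matrix_vector_mult_diff_rdistrib)
    then show ?thesis
      using that by (simp add: vec_eq_iff vector_scalar_mult_def field_simps)
  qed
  then show ?thesis
    using that X eig by meson
qed

corollary unitary_eigenbasis:
  assumes "unitary U"
  obtains X where "onb X" "\<And>x. x \<in> X \<Longrightarrow> \<exists>c. U *v x = c *s x \<and> cmod c = 1"
proof -
  obtain X where X: "onb X" and eig: "\<And>x. x \<in> X \<Longrightarrow> \<exists>c. U *v x = c *s x"
    using normal_eigenbasis[of U] assms by (auto simp: unitary_def)
  have "cmod c = 1" if "x \<in> X" "U *v x = c *s x" for x c
    using unitary_norm[OF assms, of x] orthonormal_norm[OF onb_imp_orthonormal[OF X] that(1)] that(2)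
    by (simp add: norm_scale)
  then show ?thesis
    using that X eig by blast
qed
section \<open>Kraus families and the variational formula\<close>

definition kraus :: "nat \<Rightarrow> (nat \<Rightarrow> 'n::finite cmat) \<Rightarrow> bool" where
  "kraus k C \<longleftrightarrow> (\<Sum>i<k. cadj (C i) ** C i) = mat 1"

lemma kraus_L2_set:
  assumes "kraus k C"
  shows "L2_set (\<lambda>i. norm (C i *v x)) {..<k} = norm x"
proof -
  have "(\<Sum>i<k. (norm (C i *v x))\<^sup>2) = Re (cinner x ((\<Sum>i<k. cadj (C i) ** C i) *v x))"
    by (simp add: Re_sum cinner_self matrix_vector_mul_assoc[symmetric] cinner_cadj
        sum_matrix_vector_mult cinner_sum_right)
  also have "\<dots> = (norm x)\<^sup>2"
    using assms by (simp add: kraus_def cinner_self)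
  finally show ?thesis
    by (simp add: L2_set_def)
qed

theorem sum_opnorm_kraus_le_trnorm:
  fixes A :: "'n::finite cmat"
  assumes C: "kraus k C"
  shows "(\<Sum>i<k. opnorm (C i ** A ** cadj (C i))) \<le> trnorm A"
proof -
  obtain T where T: "onb T"
    and eig: "\<And>s. s \<in> T \<Longrightarrow> (cadj A ** A) *v s = complex_of_real ((norm (A *v s))\<^sup>2) *s s"
    using gram_eigenbasis by blast
  have "opnorm (C i ** A ** cadj (C i)) \<le> (\<Sum>s\<in>T. norm (C i *v (A *v s)) * norm (C i *v s))"
    for i
  proof -
    have "C i ** A ** cadj (C i) = C i ** (\<Sum>s\<in>T. outer (A *v s) s) ** cadj (C i)"
      by (simp add: onb_matrix_expand[OF T])
    also have "\<dots> = (\<Sum>s\<in>T. outer (C i *v (A *v s)) (C i *v s))"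
      by (simp add: matrix_mult_sum_right sum_matrix_mult mult_outer outer_mult)
    finally have "opnorm (C i ** A ** cadj (C i))
        \<le> (\<Sum>s\<in>T. opnorm (outer (C i *v (A *v s)) (C i *v s)))"
      by (simp add: opnorm_sum)
    also have "\<dots> \<le> (\<Sum>s\<in>T. norm (C i *v (A *v s)) * norm (C i *v s))"
      by (intro sum_mono opnorm_outer_le)
    finally show ?thesis .
  qed
  then have "(\<Sum>i<k. opnorm (C i ** A ** cadj (C i)))
      \<le> (\<Sum>s\<in>T. \<Sum>i<k. \<bar>norm (C i *v (A *v s))\<bar> * \<bar>norm (C i *v s)\<bar>)"
    by (simp add: sum_mono sum.swap[of _ "{..<k}"])
  also have "\<dots> \<le> (\<Sum>s\<in>T. L2_set (\<lambda>i. norm (C i *v (A *v s))) {..<k}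
                          * L2_set (\<lambda>i. norm (C i *v s)) {..<k})"
    by (intro sum_mono L2_set_mult_ineq)
  also have "\<dots> = (\<Sum>s\<in>T. norm (A *v s))"
    using orthonormal_norm[OF onb_imp_orthonormal[OF T]] by (simp add: kraus_L2_set[OF C])
  also have "\<dots> = trnorm A"
    by (simp add: trnorm_gram_eigenbasis[OF T eig])
  finally show ?thesis .
qed

lemma kraus_of_onb:
  fixes X :: "(complex^'n::finite) set" and e :: "complex^'n"
  assumes X: "onb X" and e: "norm e = 1"
  obtains C where "kraus (card X) C"
    "\<And>A. (\<Sum>j<card X. opnorm (C j ** A ** cadj (C j))) = (\<Sum>x\<in>X. cmod (cinner x (A *v x)))"
proof -
  obtain h where h: "bij_betw h {..<card X} X"
    using ex_bij_betw_nat_finite[of X] X by (auto simp: onb_def orthonormal_def atLeast0LessThan)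
  define C where "C j = outer e (h j)" for j
  have "(\<Sum>j<card X. cadj (C j) ** C j) = (\<Sum>j<card X. outer (h j) (h j))"
    using e cinner_self_eq_1[of e] by (simp add: C_def cadj_outer outer_outer)
  also have "\<dots> = mat 1"
    using sum.reindex_bij_betw[OF h, of "\<lambda>x. outer x x"] onb_sum_outer[OF X] by simp
  finally have "kraus (card X) C"
    by (simp add: kraus_def)
  moreover have "(\<Sum>j<card X. opnorm (C j ** A ** cadj (C j))) = (\<Sum>x\<in>X. cmod (cinner x (A *v x)))"
    for A
  proof -
    have "C j ** A ** cadj (C j) = smat (cinner (h j) (A *v h j)) (outer e e)" for j
      unfolding C_def cadj_outer outer_mult[of e "h j" A] outer_outer cinner_adj ..
    then show ?thesis
      using sum.reindex_bij_betw[OF h, of "\<lambda>x. cmod (cinner x (A *v x))"]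
      by (simp add: opnorm_smat_outer_unit[OF e])
  qed
  ultimately show ?thesis
    using that by blast
qed

lemma trnorm_eq_sum_cmod_diag:
  fixes A :: "'n::finite cmat"
  obtains X where "onb X" "trnorm A = (\<Sum>x\<in>X. cmod (cinner x (A *v x)))"
proof -
  obtain U where U: "unitary U" and UA: "U ** mabs A = A"
    using polar_decomposition by blast
  obtain X where X: "onb X" and eig: "\<And>x. x \<in> X \<Longrightarrow> \<exists>c. cadj U *v x = c *s x \<and> cmod c = 1"
    using unitary_eigenbasis[OF unitary_cadj[OF U]] by blast
  have "cmod (cinner x (A *v x)) = Re (cinner x (mabs A *v x))" if "x \<in> X" for x
  proof -
    obtain c where c: "cadj U *v x = c *s x" "cmod c = 1"
      using eig[OF \<open>x \<in> X\<close>] by blast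
    have "A *v x = U *v (mabs A *v x)"
      using UA by (simp add: matrix_vector_mul_assoc)
    then have "cinner x (A *v x) = cinner (cadj U *v x) (mabs A *v x)"
      by (simp only: cinner_adj)
    also have "\<dots> = cnj c * cinner x (mabs A *v x)"
      by (simp add: c cinner_scale_left)
    finally have "cinner x (A *v x) = cnj c * cinner x (mabs A *v x)" .
    then show ?thesis
      using c(2) psd_cmod_cinner[OF psd_mabs] by (simp add: norm_mult)
  qed
  then have "trnorm A = (\<Sum>x\<in>X. cmod (cinner x (A *v x)))"
    by (simp add: trnorm_def trace_onb[OF X] Re_sum)
  then show ?thesis
    using that X by blast
qed

theorem trnorm_attained:
  fixes A :: "'n::finite cmat"
  obtains C where "kraus CARD('n) C" "(\<Sum>i<CARD('n). opnorm (C i ** A ** cadj (C i))) = trnorm A"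
proof -
  obtain X where X: "onb X" and tr: "trnorm A = (\<Sum>x\<in>X. cmod (cinner x (A *v x)))"
    using trnorm_eq_sum_cmod_diag by blast
  have card: "card X = CARD('n)"
    by (rule card_onb[OF X])
  then obtain e where "e \<in> X"
    by fastforce
  then have "norm e = 1"
    by (rule orthonormal_norm[OF onb_imp_orthonormal[OF X]])
  then obtain C where "kraus (card X) C"
    "(\<Sum>j<card X. opnorm (C j ** A ** cadj (C j))) = (\<Sum>x\<in>X. cmod (cinner x (A *v x)))"
    using kraus_of_onb[OF X] by blast
  then show ?thesis
    using that tr card by simp
qed

lemma opnorm_le_trnorm: "opnorm X \<le> trnorm X"
  using sum_opnorm_kraus_le_trnorm[of 1 "\<lambda>_. mat 1" X] by (simp add: kraus_def)

lemma trnorm_nonneg: "0 \<le> trnorm X"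
  using opnorm_nonneg[of X] opnorm_le_trnorm[of X] by linarith

lemma trnorm_smat:
  fixes X :: "'n::finite cmat"
  shows "trnorm (smat c X) = cmod c * trnorm X"
proof (rule antisym)
  obtain C where C: "kraus CARD('n) C"
    "(\<Sum>i<CARD('n). opnorm (C i ** smat c X ** cadj (C i))) = trnorm (smat c X)"
    using trnorm_attained by blast
  then have "trnorm (smat c X) = cmod c * (\<Sum>i<CARD('n). opnorm (C i ** X ** cadj (C i)))"
    by (simp add: mult_smat_mult opnorm_smat sum_distrib_left)
  also have "\<dots> \<le> cmod c * trnorm X"
    by (intro mult_left_mono sum_opnorm_kraus_le_trnorm[OF C(1)]) simp
  finally show "trnorm (smat c X) \<le> cmod c * trnorm X" .
next
  obtain C where C: "kraus CARD('n) C" "(\<Sum>i<CARD('n). opnorm (C i ** X ** cadj (C i))) = trnorm X"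
    using trnorm_attained by blast
  have "cmod c * trnorm X = (\<Sum>i<CARD('n). opnorm (C i ** smat c X ** cadj (C i)))"
    unfolding C(2)[symmetric] by (simp add: mult_smat_mult opnorm_smat sum_distrib_left)
  also have "\<dots> \<le> trnorm (smat c X)"
    by (rule sum_opnorm_kraus_le_trnorm[OF C(1)])
  finally show "cmod c * trnorm X \<le> trnorm (smat c X)" .
qed

lemma trnorm_eq_0_iff: "trnorm X = 0 \<longleftrightarrow> X = 0"
proof
  assume "trnorm X = 0"
  then have "opnorm X = 0"
    using opnorm_le_trnorm[of X] opnorm_nonneg[of X] by linarith
  then show "X = 0"
    by (simp add: opnorm_eq_0_iff)
next
  assume "X = 0"
  moreover have "smat 0 X = 0"
    by (simp add: smat_def vec_eq_iff)
  ultimately show "trnorm X = 0"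
    using trnorm_smat[of 0 X] by simp
qed

lemma trnorm_triangle:
  fixes X Y :: "'n::finite cmat"
  shows "trnorm (X + Y) \<le> trnorm X + trnorm Y"
proof -
  obtain C where C: "kraus CARD('n) C"
    "(\<Sum>i<CARD('n). opnorm (C i ** (X + Y) ** cadj (C i))) = trnorm (X + Y)"
    using trnorm_attained by blast
  have "trnorm (X + Y)
      \<le> (\<Sum>i<CARD('n). opnorm (C i ** X ** cadj (C i)) + opnorm (C i ** Y ** cadj (C i)))"
    unfolding C(2)[symmetric]
    by (intro sum_mono) (simp add: matrix_add_ldistrib matrix_add_rdistrib opnorm_add)
  also have "\<dots> \<le> trnorm X + trnorm Y"
    unfolding sum.distrib by (intro add_mono sum_opnorm_kraus_le_trnorm[OF C(1)])
  finally show ?thesis .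
qed

lemma sum_lessThan_mult_div_mod:
  fixes g :: "nat \<Rightarrow> nat \<Rightarrow> 'a::comm_monoid_add"
  shows "(\<Sum>l<k * m. g (l div m) (l mod m)) = (\<Sum>i<k. \<Sum>j<m. g i j)"
proof -
  have "(\<Sum>l<k * m. g (l div m) (l mod m))
      = (\<Sum>i<k. \<Sum>j<m. g ((j + i * m) div m) ((j + i * m) mod m))"
    by (rule sum_mult_product)
  also have "\<dots> = (\<Sum>i<k. \<Sum>j<m. g i j)"
    by (intro sum.cong refl) simp
  finally show ?thesis .
qed

lemma kraus_compose:
  assumes C: "kraus k C" and D: "\<And>i. i < k \<Longrightarrow> kraus m (D i)"
  shows "kraus (k * m) (\<lambda>l. D (l div m) (l mod m) ** C (l div m))"
proof -
  have "(\<Sum>l<k * m. cadj (D (l div m) (l mod m) ** C (l div m)) ** (D (l div m) (l mod m) ** C (l div m)))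
      = (\<Sum>i<k. \<Sum>j<m. cadj (C i) ** (cadj (D i j) ** D i j) ** C i)"
    using sum_lessThan_mult_div_mod[where g = "\<lambda>i j. cadj (C i) ** (cadj (D i j) ** D i j) ** C i"
        and k = k and m = m]
    by (simp add: cadj_mult matrix_mul_assoc)
  also have "\<dots> = (\<Sum>i<k. cadj (C i) ** (\<Sum>j<m. cadj (D i j) ** D i j) ** C i)"
    by (simp add: matrix_mult_sum_right sum_matrix_mult)
  also have "\<dots> = (\<Sum>i<k. cadj (C i) ** C i)"
    using D by (intro sum.cong refl) (simp add: kraus_def)
  finally show ?thesis
    using C by (simp add: kraus_def)
qed

theorem trnorm_kraus_contract:
  fixes X :: "'n::finite cmat"
  assumes C: "kraus k C"
  shows "(\<Sum>i<k. trnorm (C i ** X ** cadj (C i))) \<le> trnorm X"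
proof -
  let ?n = "CARD('n)"
  let ?Y = "\<lambda>i. C i ** X ** cadj (C i)"
  have "\<forall>i. \<exists>Di. kraus ?n Di \<and> (\<Sum>j<?n. opnorm (Di j ** ?Y i ** cadj (Di j))) = trnorm (?Y i)"
  proof
    fix i
    obtain Di where "kraus ?n Di" "(\<Sum>j<?n. opnorm (Di j ** ?Y i ** cadj (Di j))) = trnorm (?Y i)"
      using trnorm_attained by blast
    then show "\<exists>Di. kraus ?n Di \<and> (\<Sum>j<?n. opnorm (Di j ** ?Y i ** cadj (Di j))) = trnorm (?Y i)"
      by blast
  qed
  then obtain D where D: "\<forall>i. kraus ?n (D i) \<and>
      (\<Sum>j<?n. opnorm (D i j ** ?Y i ** cadj (D i j))) = trnorm (?Y i)"
    by (rule choice[THEN exE])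
  have "(\<Sum>i<k. trnorm (?Y i))
      = (\<Sum>l<k * ?n. opnorm ((D (l div ?n) (l mod ?n) ** C (l div ?n)) ** X
                                ** cadj (D (l div ?n) (l mod ?n) ** C (l div ?n))))"
    using D sum_lessThan_mult_div_mod[where g = "\<lambda>i j. opnorm (D i j ** ?Y i ** cadj (D i j))"
        and k = k and m = ?n]
    by (simp add: cadj_mult matrix_mul_assoc)
  also have "\<dots> \<le> trnorm X"
    using D by (intro sum_opnorm_kraus_le_trnorm kraus_compose[OF C]) blast
  finally show ?thesis .
qed
lemma is_L_norm_trnorm: "is_L_norm (trnorm :: 'n::finite cmat \<Rightarrow> real)"
  using trnorm_nonneg trnorm_eq_0_iff trnorm_smat[unfolded smat_def] trnorm_triangle
    trnorm_kraus_contract[unfolded kraus_def]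
  by (auto simp: is_L_norm_def is_matrix_norm_def)

lemma trnorm_eq_Sup:
  fixes A :: "'n::finite cmat"
  shows "trnorm A = Sup {(\<Sum>i<k. opnorm (C i ** A ** cadj (C i))) | (k::nat) C.
                           (\<Sum>i<k. cadj (C i) ** C i) = (mat 1 :: 'n cmat)}"
proof (rule cSup_eq_maximum[symmetric])
  obtain C where "kraus CARD('n) C" "(\<Sum>i<CARD('n). opnorm (C i ** A ** cadj (C i))) = trnorm A"
    using trnorm_attained by blast
  then show "trnorm A \<in> {(\<Sum>i<k. opnorm (C i ** A ** cadj (C i))) | (k::nat) C.
                           (\<Sum>i<k. cadj (C i) ** C i) = (mat 1 :: 'n cmat)}"
    unfolding kraus_def by force
next
  fix x
  assume "x \<in> {(\<Sum>i<k. opnorm (C i ** A ** cadj (C i))) | (k::nat) C.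
                           (\<Sum>i<k. cadj (C i) ** C i) = (mat 1 :: 'n cmat)}"
  then show "x \<le> trnorm A"
    using sum_opnorm_kraus_le_trnorm unfolding kraus_def by blast
qed

lemma trnorm_le_L_norm:
  fixes N :: "'n::finite cmat \<Rightarrow> real"
  assumes N: "is_L_norm N" and above: "\<And>X. opnorm X \<le> N X"
  shows "trnorm X \<le> N X"
proof -
  obtain C where C: "kraus CARD('n) C"
    and eq: "(\<Sum>i<CARD('n). opnorm (C i ** X ** cadj (C i))) = trnorm X"
    using trnorm_attained by blast
  have "trnorm X \<le> (\<Sum>i<CARD('n). N (C i ** X ** cadj (C i)))"
    unfolding eq[symmetric] by (intro sum_mono above)
  also have "\<dots> \<le> N X"
    using N C unfolding is_L_norm_def kraus_def by blast
  finally show ?thesis .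
qed

theorem theorem3p3:
  fixes A :: "'n::finite cmat"
  shows "trnorm A = Sup {(\<Sum>i<k. opnorm (C i ** A ** cadj (C i))) | (k::nat) C.
                           (\<Sum>i<k. cadj (C i) ** C i) = (mat 1 :: 'n cmat)}
    \<and> (is_L_norm (trnorm :: 'n cmat \<Rightarrow> real) \<and> (\<forall>X::'n cmat. opnorm X \<le> trnorm X))
    \<and> (\<forall>N :: 'n cmat \<Rightarrow> real. is_L_norm N \<and> (\<forall>X. opnorm X \<le> N X)
          \<longrightarrow> (\<forall>X. trnorm X \<le> N X))"
  using trnorm_eq_Sup is_L_norm_trnorm opnorm_le_trnorm trnorm_le_L_norm by blast

end
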